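(* Let $M$ be a $4$-dimensional manifold with local coordinates $(x^1,\dots,x^4)$, $e_i=\partial/\partial x^i$, and Riemannian metric $g$ with components \[(g_{ij})=\begin{pmatrix} A&B&C&B\\ B&A&B&C\\ C&B&A&B\\ B&C&B&A\end{pmatrix},\] $A,B,C$ smooth functions with $A>C>B>0$. Let $P$ be the almost product structure with component matrix having rows $(0,0,1,0),(0,0,0,1),(1,0,0,0),(0,1,0,0)$. Then $(M,g,P)$ belongs to the class $\mathcal{W}_2$ if and only if \[(A+C)(C_3-A_1)=2B(B_3-B_1),\quad C_3-A_1=A_3-C_1,\quad (A+C)(C_4-A_2)=2B(B_4-B_2),\quad C_4-A_2=A_4-C_2,\] where $A_i=\partial A/\partial x^i$, $B_i=\partial B/\partial x^i$, $C_i=\partial C/\partial x^i$.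
   Context: Let $\nabla$ be the Levi-Civita connection of $g$, $F(x,y,z)=g((\nabla_xP)y,z)$, and $\theta(x)=g^{ij}F(e_i,e_j,x)$ with $(g^{ij})$ the inverse of $(g_{ij})$. The manifold $(M,g,P)$ belongs to the class $\mathcal{W}_2$ if for all vector fields $x,y,z$: \[F(x,y,Pz)+F(y,z,Px)+F(z,x,Py)=0\quad\text{and}\quad \theta(z)=0.\] *)

theory Defs
  imports "HOL-Analysis.Analysis"
begin

text \<open>Coordinate calculus on an open chart domain U of real^n.
  The coordinate x^i corresponds to the index i, e_i = axis i 1.\<close>

definition pd :: "'n::finite \<Rightarrow> (real^'n \<Rightarrow> real) \<Rightarrow> real^'n \<Rightarrow> real" where
  "pd i f p = deriv (\<lambda>t. f (p + t *\<^sub>R axis i 1)) 0"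

fun Ck_on :: "nat \<Rightarrow> (real^'n::finite) set \<Rightarrow> (real^'n \<Rightarrow> real) \<Rightarrow> bool" where
  "Ck_on 0 U f = continuous_on U f"
| "Ck_on (Suc k) U f = (continuous_on U f \<and>
      (\<forall>i. \<forall>p\<in>U. (\<lambda>t. f (p + t *\<^sub>R axis i 1)) differentiable (at 0)) \<and>
      (\<forall>i. Ck_on k U (pd i f)))"

definition coord_smooth_on :: "(real^'n::finite) set \<Rightarrow> (real^'n \<Rightarrow> real) \<Rightarrow> bool" where
  "coord_smooth_on U f = (\<forall>k. Ck_on k U f)"

text \<open>Christoffel symbols of the Levi-Civita connection:
  nabla_{e_i} e_j = sum_k Gamma k i j e_k.\<close>
definition christoffel :: "(real^'n::finite \<Rightarrow> real^'n^'n) \<Rightarrow> real^'n \<Rightarrow> 'n \<Rightarrow> 'n \<Rightarrow> 'n \<Rightarrow> real" where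
  "christoffel g p k i j = (1/2) * (\<Sum>l\<in>UNIV. matrix_inv (g p) $ k $ l *
      (pd i (\<lambda>q. g q $ j $ l) p + pd j (\<lambda>q. g q $ i $ l) p - pd l (\<lambda>q. g q $ i $ j) p))"

text \<open>Constant endomorphism P with P e_j = sum_a P$a$j e_a.
  Component b of (nabla_{e_i} P) e_j = nabla_{e_i}(P e_j) - P(nabla_{e_i} e_j).\<close>
definition nablaP :: "(real^'n::finite \<Rightarrow> real^'n^'n) \<Rightarrow> real^'n^'n \<Rightarrow> real^'n \<Rightarrow> 'n \<Rightarrow> 'n \<Rightarrow> real^'n" where
  "nablaP g P p i j = (\<chi> b. (\<Sum>a\<in>UNIV. P $ a $ j * christoffel g p b i a)
                         - (\<Sum>c\<in>UNIV. christoffel g p c i j * P $ b $ c))"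

definition Fcoord :: "(real^'n::finite \<Rightarrow> real^'n^'n) \<Rightarrow> real^'n^'n \<Rightarrow> real^'n \<Rightarrow> 'n \<Rightarrow> 'n \<Rightarrow> 'n \<Rightarrow> real" where
  "Fcoord g P p i j k = (\<Sum>b\<in>UNIV. g p $ b $ k * nablaP g P p i j $ b)"

definition Ften :: "(real^'n::finite \<Rightarrow> real^'n^'n) \<Rightarrow> real^'n^'n \<Rightarrow> real^'n \<Rightarrow> real^'n \<Rightarrow> real^'n \<Rightarrow> real^'n \<Rightarrow> real" where
  "Ften g P p x y z = (\<Sum>i\<in>UNIV. \<Sum>j\<in>UNIV. \<Sum>k\<in>UNIV. x $ i * y $ j * z $ k * Fcoord g P p i j k)"

definition theta :: "(real^'n::finite \<Rightarrow> real^'n^'n) \<Rightarrow> real^'n^'n \<Rightarrow> real^'n \<Rightarrow> real^'n \<Rightarrow> real" where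
  "theta g P p z = (\<Sum>i\<in>UNIV. \<Sum>j\<in>UNIV. matrix_inv (g p) $ i $ j * Ften g P p (axis i 1) (axis j 1) z)"

definition W2_at :: "(real^'n::finite \<Rightarrow> real^'n^'n) \<Rightarrow> real^'n^'n \<Rightarrow> real^'n \<Rightarrow> bool" where
  "W2_at g P p = ((\<forall>x y z. Ften g P p x y (P *v z) + Ften g P p y z (P *v x) + Ften g P p z x (P *v y) = 0)
                  \<and> (\<forall>z. theta g P p z = 0))"

definition gmat :: "(real^4 \<Rightarrow> real) \<Rightarrow> (real^4 \<Rightarrow> real) \<Rightarrow> (real^4 \<Rightarrow> real) \<Rightarrow> real^4 \<Rightarrow> real^4^4" where
  "gmat A B C p = vector [vector [A p, B p, C p, B p], vector [B p, A p, B p, C p],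
                          vector [C p, B p, A p, B p], vector [B p, C p, B p, A p]]"

definition Pmat :: "real^4^4" where
  "Pmat = vector [vector [0,0,1,0], vector [0,0,0,1], vector [1,0,0,0], vector [0,1,0,0]]"

lemma "gmat A B C p $ 1 $ 3 = C p" "gmat A B C p $ 4 $ 2 = C p" "Pmat $ 4 $ 2 = 1"
  by (simp_all add: gmat_def Pmat_def vector_def)

end

theory Submission
  imports Defs
begin

text \<open>If the involutive coordinate permutation P is an isometry of g, then
  F(e_i, e_j, e_k) = Gamma(i, Pj, k) - Gamma(i, j, Pk) with the Christoffel symbols of the
  first kind, and the cyclic sum F(x, y, Pz) + F(y, z, Px) + F(z, x, Py) vanishes identically
  by the symmetry and P-invariance of g alone; so W_2 reduces to theta = 0. The inverse of g
  has the same shape as g (the eigenvalues of g are A + 2B + C, A - 2B + C and the double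
  A - C), and for k = 1, 2 the components theta_k, theta_(k+2) form a linear system in
  A_(k+2) - C_k, C_(k+2) - A_k and B_(k+2) - B_k equivalent to one pair of the stated
  equations. Only the first partial derivatives at the point enter.\<close>

lemma matrix_inv_unique:
  fixes M N :: "'a::semiring_1^'n::finite^'n"
  assumes "M ** N = mat 1" "N ** M = mat 1"
  shows "matrix_inv M = N"
proof -
  have "\<exists>N. M ** N = mat 1 \<and> N ** M = mat 1" using assms by blast
  then have "M ** matrix_inv M = mat 1 \<and> matrix_inv M ** M = mat 1"
    unfolding matrix_inv_def by (rule someI_ex)
  then have inv: "matrix_inv M ** M = mat 1" ..
  have "matrix_inv M = matrix_inv M ** (M ** N)" by (simp add: assms matrix_mul_rid)
  also have "\<dots> = N" by (simp add: matrix_mul_assoc inv matrix_mul_lid)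
  finally show ?thesis .
qed

lemma matrix_inv_right:
  fixes M :: "'a::semiring_1^'n::finite^'n"
  assumes "invertible M"
  shows "M ** matrix_inv M = mat 1"
proof -
  have "M ** matrix_inv M = mat 1 \<and> matrix_inv M ** M = mat 1"
    using assms unfolding invertible_def matrix_inv_def by (rule someI_ex)
  then show ?thesis ..
qed

lemma sum_rotate3:
  "(\<Sum>i\<in>I. \<Sum>j\<in>J. \<Sum>k\<in>K. f i j k) = (\<Sum>k\<in>K. \<Sum>i\<in>I. \<Sum>j\<in>J. f i j k)"
proof -
  have "(\<Sum>i\<in>I. \<Sum>j\<in>J. \<Sum>k\<in>K. f i j k) = (\<Sum>i\<in>I. \<Sum>k\<in>K. \<Sum>j\<in>J. f i j k)"
    by (intro sum.cong refl sum.swap)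
  also have "\<dots> = (\<Sum>k\<in>K. \<Sum>i\<in>I. \<Sum>j\<in>J. f i j k)"
    by (rule sum.swap)
  finally show ?thesis .
qed

definition christoffel_first ::
    "(real^'n::finite \<Rightarrow> real^'n^'n) \<Rightarrow> real^'n \<Rightarrow> 'n \<Rightarrow> 'n \<Rightarrow> 'n \<Rightarrow> real" where
  "christoffel_first g p i j l =
     (pd i (\<lambda>q. g q $ j $ l) p + pd j (\<lambda>q. g q $ i $ l) p - pd l (\<lambda>q. g q $ i $ j) p) / 2"

lemma christoffel_lower:
  fixes g :: "real^'n::finite \<Rightarrow> real^'n^'n"
  assumes "transpose (g p) ** matrix_inv (g p) = mat 1"
  shows "(\<Sum>b\<in>UNIV. g p $ b $ l * christoffel g p b i j) = christoffel_first g p i j l"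
proof -
  let ?L = "\<lambda>m. pd i (\<lambda>q. g q $ j $ m) p + pd j (\<lambda>q. g q $ i $ m) p - pd m (\<lambda>q. g q $ i $ j) p"
  have delta: "(\<Sum>b\<in>UNIV. g p $ b $ l * matrix_inv (g p) $ b $ m) * x = (if l = m then x else 0)" for m x
    using arg_cong[OF assms, of "\<lambda>M. M $ l $ m"]
    by (simp add: matrix_matrix_mult_def transpose_def mat_def)
  have "(\<Sum>b\<in>UNIV. g p $ b $ l * christoffel g p b i j)
      = (\<Sum>b\<in>UNIV. \<Sum>m\<in>UNIV. g p $ b $ l * matrix_inv (g p) $ b $ m * ?L m) / 2"
    unfolding christoffel_def by (simp add: sum_distrib_left sum_divide_distrib mult.assoc)
  also have "\<dots> = (\<Sum>m\<in>UNIV. (\<Sum>b\<in>UNIV. g p $ b $ l * matrix_inv (g p) $ b $ m) * ?L m) / 2"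
    by (subst sum.swap) (simp add: sum_distrib_right)
  also have "\<dots> = christoffel_first g p i j l"
    by (simp add: delta christoffel_first_def)
  finally show ?thesis .
qed

definition perm_matrix :: "('n::finite \<Rightarrow> 'n) \<Rightarrow> real^'n^'n" where
  "perm_matrix s = (\<chi> a j. if a = s j then 1 else 0)"

definition theta_coord ::
    "(real^'n::finite \<Rightarrow> real^'n^'n) \<Rightarrow> real^'n^'n \<Rightarrow> real^'n \<Rightarrow> 'n \<Rightarrow> real" where
  "theta_coord g P p k = (\<Sum>i\<in>UNIV. \<Sum>j\<in>UNIV. matrix_inv (g p) $ i $ j * Fcoord g P p i j k)"

lemma sum_indicator_mult:
  fixes a :: "'n::finite" and f :: "'n \<Rightarrow> 'a::semiring_1"
  shows "(\<Sum>x\<in>UNIV. (if x = a then 1 else 0) * f x) = f a"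
proof -
  have "(\<Sum>x\<in>UNIV. (if x = a then 1 else 0) * f x) = (\<Sum>x\<in>UNIV. if x = a then f x else 0)"
    by (rule sum.cong) auto
  then show ?thesis by simp
qed

lemma Ften_axis_axis: "Ften g P p (axis i 1) (axis j 1) z = (\<Sum>k\<in>UNIV. z $ k * Fcoord g P p i j k)"
  unfolding Ften_def axis_def vec_lambda_beta
  by (simp only: mult.assoc sum_distrib_left[symmetric] sum_indicator_mult)

lemma theta_eq_sum_theta_coord: "theta g P p z = (\<Sum>k\<in>UNIV. z $ k * theta_coord g P p k)"
proof -
  have "theta g P p z = (\<Sum>i\<in>UNIV. \<Sum>j\<in>UNIV. \<Sum>k\<in>UNIV. z $ k * (matrix_inv (g p) $ i $ j * Fcoord g P p i j k))"
    unfolding theta_def Ften_axis_axis by (simp add: sum_distrib_left mult.left_commute)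
  also have "\<dots> = (\<Sum>k\<in>UNIV. z $ k * theta_coord g P p k)"
    by (subst sum_rotate3) (simp add: theta_coord_def sum_distrib_left)
  finally show ?thesis .
qed

lemma theta_eq_zero_iff: "(\<forall>z. theta g P p z = 0) \<longleftrightarrow> (\<forall>k. theta_coord g P p k = 0)"
proof
  assume "\<forall>z. theta g P p z = 0"
  moreover have "theta g P p (axis k 1) = theta_coord g P p k" for k
    unfolding theta_eq_sum_theta_coord axis_def vec_lambda_beta sum_indicator_mult ..
  ultimately show "\<forall>k. theta_coord g P p k = 0" by simp
qed (simp add: theta_eq_sum_theta_coord)

locale riemannian_P_chart =
  fixes g :: "real^'n::finite \<Rightarrow> real^'n^'n" and s :: "'n \<Rightarrow> 'n"
  assumes involutive [simp]: "s (s j) = j"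
    and symmetric: "g q $ j $ k = g q $ k $ j"
    and isometric [simp]: "g q $ s j $ s k = g q $ j $ k"
begin

lemma isometric_shift: "g q $ s j $ k = g q $ j $ s k"
  by (metis isometric involutive)

lemma isometric_swap: "g q $ i $ s k = g q $ k $ s i"
  by (metis isometric_shift symmetric)

lemma sum_reindex: "(\<Sum>k\<in>UNIV. f (s k)) = (\<Sum>k\<in>UNIV. f k)"
proof -
  have "bij s" by (metis involutive bij_betw_byWitness subset_UNIV image_subsetI UNIV_I)
  then show ?thesis by (rule sum.reindex_bij_betw[of s UNIV UNIV])
qed

lemma perm_matrix_mult_vec: "(perm_matrix s *v z) $ k = z $ s k"
proof -
  have "(perm_matrix s *v z) $ k = (\<Sum>j\<in>UNIV. (if k = s j then 1 else 0) * z $ j)"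
    by (simp add: perm_matrix_def matrix_vector_mult_def)
  also have "\<dots> = (\<Sum>j\<in>UNIV. if s k = j then z $ j else 0)"
    by (rule sum.cong) auto
  finally show ?thesis by simp
qed

lemma nablaP_perm_matrix:
  "nablaP g (perm_matrix s) p i j $ b = christoffel g p b i (s j) - christoffel g p (s b) i j"
proof -
  have "(\<Sum>a\<in>UNIV. (if a = s j then 1 else 0) * christoffel g p b i a) = christoffel g p b i (s j)"
    by (simp add: if_distrib if_distribR cong: if_cong)
  moreover have "(\<Sum>c\<in>UNIV. christoffel g p c i j * (if b = s c then 1 else 0)) = christoffel g p (s b) i j"
  proof -
    have "(\<Sum>c\<in>UNIV. christoffel g p c i j * (if b = s c then 1 else 0))
        = (\<Sum>c\<in>UNIV. if s b = c then christoffel g p c i j else 0)"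
      by (rule sum.cong) auto
    then show ?thesis by simp
  qed
  ultimately show ?thesis by (simp add: nablaP_def perm_matrix_def)
qed

lemma Fcoord_perm_matrix:
  assumes "invertible (g p)"
  shows "Fcoord g (perm_matrix s) p i j k
       = christoffel_first g p i (s j) k - christoffel_first g p i j (s k)"
proof -
  have "transpose (g p) = g p" by (simp add: transpose_def vec_eq_iff symmetric)
  then have lower: "(\<Sum>b\<in>UNIV. g p $ b $ l * christoffel g p b i a) = christoffel_first g p i a l" for a l
    by (intro christoffel_lower) (simp add: matrix_inv_right[OF assms])
  have "(\<Sum>b\<in>UNIV. g p $ b $ k * christoffel g p (s b) i j)
      = (\<Sum>b\<in>UNIV. g p $ s b $ k * christoffel g p (s (s b)) i j)"
    by (rule sum_reindex[symmetric])
  also have "\<dots> = (\<Sum>b\<in>UNIV. g p $ b $ s k * christoffel g p b i j)"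
    by (simp add: isometric_shift)
  finally show ?thesis
    by (simp add: Fcoord_def nablaP_perm_matrix right_diff_distrib sum_subtractf lower)
qed

lemma christoffel_first_cyclic:
  fixes p :: "real^'n"
  defines "G \<equiv> \<lambda>i j k. christoffel_first g p i (s j) (s k) - christoffel_first g p i j k"
  shows "G i j k + G j k i + G k i j = 0"
proof -
  define d where "d a b c = pd a (\<lambda>q. g q $ b $ c) p" for a b c
  have sym: "d a b c = d a c b" for a b c
    unfolding d_def by (subst symmetric) (rule refl)
  have iso: "d a (s b) (s c) = d a b c" for a b c
    by (simp add: d_def)
  have swap: "d a b (s c) = d a c (s b)" for a b c
    unfolding d_def by (subst isometric_swap) (rule refl)
  have "G i j k = (d i (s j) (s k) + d (s j) i (s k) - d (s k) i (s j) - d i j k - d j i k + d k i j) / 2"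
       "G j k i = (d j (s k) (s i) + d (s k) j (s i) - d (s i) j (s k) - d j k i - d k j i + d i j k) / 2"
       "G k i j = (d k (s i) (s j) + d (s i) k (s j) - d (s j) k (s i) - d k i j - d i k j + d j k i) / 2"
    by (simp_all add: G_def christoffel_first_def d_def diff_divide_distrib add_divide_distrib)
  then show ?thesis
    using iso[of i j k] iso[of j k i] iso[of k i j] sym[of j i k] sym[of k i j] sym[of i j k]
      swap[of "s j" i k] swap[of "s k" i j] swap[of "s i" j k]
    by (simp add: field_simps)
qed

lemma Ften_perm_last:
  assumes "invertible (g p)"
  shows "Ften g (perm_matrix s) p x y (perm_matrix s *v z)
       = (\<Sum>i\<in>UNIV. \<Sum>j\<in>UNIV. \<Sum>k\<in>UNIV. x $ i * y $ j * z $ k *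
            (christoffel_first g p i (s j) (s k) - christoffel_first g p i j k))"
proof -
  have "(\<Sum>k\<in>UNIV. x $ i * y $ j * z $ s k *
            (christoffel_first g p i (s j) k - christoffel_first g p i j (s k)))
      = (\<Sum>k\<in>UNIV. x $ i * y $ j * z $ k *
            (christoffel_first g p i (s j) (s k) - christoffel_first g p i j k))" for i j
    using sum_reindex[of "\<lambda>k. x $ i * y $ j * z $ k *
            (christoffel_first g p i (s j) (s k) - christoffel_first g p i j k)"] by simp
  then show ?thesis
    unfolding Ften_def perm_matrix_mult_vec Fcoord_perm_matrix[OF assms] by simp
qed

lemma cyclic_condition:
  assumes "invertible (g p)"
  shows "Ften g (perm_matrix s) p x y (perm_matrix s *v z)
       + Ften g (perm_matrix s) p y z (perm_matrix s *v x)
       + Ften g (perm_matrix s) p z x (perm_matrix s *v y) = 0"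
proof -
  define G where "G i j k = christoffel_first g p i (s j) (s k) - christoffel_first g p i j k" for i j k
  have "Ften g (perm_matrix s) p y z (perm_matrix s *v x)
      = (\<Sum>i\<in>UNIV. \<Sum>j\<in>UNIV. \<Sum>k\<in>UNIV. x $ i * y $ j * z $ k * G j k i)"
    unfolding Ften_perm_last[OF assms] G_def by (subst sum_rotate3) (simp add: ac_simps)
  moreover have "Ften g (perm_matrix s) p z x (perm_matrix s *v y)
      = (\<Sum>i\<in>UNIV. \<Sum>j\<in>UNIV. \<Sum>k\<in>UNIV. x $ i * y $ j * z $ k * G k i j)"
    unfolding Ften_perm_last[OF assms] G_def by (subst (2) sum_rotate3) (simp add: ac_simps)
  moreover have "G i j k + G j k i + G k i j = 0" for i j k
    unfolding G_def by (rule christoffel_first_cyclic)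
  ultimately show ?thesis
    unfolding Ften_perm_last[OF assms] G_def[symmetric]
    by (simp add: sum.distrib[symmetric] distrib_left[symmetric])
qed

lemma W2_at_perm_matrix_iff:
  assumes "invertible (g p)"
  shows "W2_at g (perm_matrix s) p \<longleftrightarrow> (\<forall>k. theta_coord g (perm_matrix s) p k = 0)"
  unfolding W2_at_def theta_eq_zero_iff using cyclic_condition[OF assms] by blast

end

definition sym4 :: "real \<Rightarrow> real \<Rightarrow> real \<Rightarrow> real^4^4" where
  "sym4 a b c = vector [vector [a, b, c, b], vector [b, a, b, c],
                        vector [c, b, a, b], vector [b, c, b, a]]"

lemma gmat_eq_sym4: "gmat A B C p = sym4 (A p) (B p) (C p)"
  by (simp add: gmat_def sym4_def)

lemma sym4_mult:
  "sym4 a b c ** sym4 a' b' c'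
     = sym4 (a * a' + 2 * b * b' + c * c') (a * b' + b * a' + b * c' + c * b') (a * c' + 2 * b * b' + c * a')"
  unfolding vec_eq_iff forall_4 matrix_matrix_mult_def
  by (simp add: sum_4 sym4_def vector_def algebra_simps)

lemma mat_1_eq_sym4: "mat 1 = sym4 1 0 0"
  unfolding vec_eq_iff forall_4 by (simp add: sym4_def vector_def mat_def)

text \<open>Arithmetic on the index type 4 is modulo 4, so k + 2 exchanges 1 with 3 and 2 with 4.
  The table below is needed because the simplifier evaluates 3 + 2 to the numeral 5 but reduces
  it to 1 only inside an equation.\<close>

lemma Pmat_eq_perm_matrix: "Pmat = perm_matrix (\<lambda>k. k + 2)"
  unfolding vec_eq_iff forall_4 by (simp add: Pmat_def perm_matrix_def vector_def)

lemma plus_2_num4: "(1::4) + 2 = 3" "(2::4) + 2 = 4" "(3::4) + 2 = 1" "(4::4) + 2 = 2"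
  by simp_all

definition sym4_inv_diag :: "real \<Rightarrow> real \<Rightarrow> real \<Rightarrow> real" where
  "sym4_inv_diag a b c = ((a + c) / ((a + c)\<^sup>2 - 4 * b\<^sup>2) + 1 / (a - c)) / 2"

definition sym4_inv_adj :: "real \<Rightarrow> real \<Rightarrow> real \<Rightarrow> real" where
  "sym4_inv_adj a b c = - b / ((a + c)\<^sup>2 - 4 * b\<^sup>2)"

definition sym4_inv_opp :: "real \<Rightarrow> real \<Rightarrow> real \<Rightarrow> real" where
  "sym4_inv_opp a b c = ((a + c) / ((a + c)\<^sup>2 - 4 * b\<^sup>2) - 1 / (a - c)) / 2"

definition sym4_inv :: "real \<Rightarrow> real \<Rightarrow> real \<Rightarrow> real^4^4" where
  "sym4_inv a b c = sym4 (sym4_inv_diag a b c) (sym4_inv_adj a b c) (sym4_inv_opp a b c)"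

lemma sym4_inv_entries:
  "sym4_inv_diag a b c + sym4_inv_opp a b c = (a + c) / ((a + c)\<^sup>2 - 4 * b\<^sup>2)"
  "sym4_inv_diag a b c - sym4_inv_opp a b c = 1 / (a - c)"
proof -
  have "(x + y) / 2 + (x - y) / 2 = x" "(x + y) / 2 - (x - y) / 2 = y" for x y :: real
    by (simp_all add: field_simps)
  then show "sym4_inv_diag a b c + sym4_inv_opp a b c = (a + c) / ((a + c)\<^sup>2 - 4 * b\<^sup>2)"
    "sym4_inv_diag a b c - sym4_inv_opp a b c = 1 / (a - c)"
    by (simp_all only: sym4_inv_diag_def sym4_inv_opp_def)
qed

lemma sym4_mult_sym4_inv:
  assumes "(a + c)\<^sup>2 \<noteq> 4 * b\<^sup>2" "a \<noteq> c"
  shows "sym4 a b c ** sym4_inv a b c = mat 1" "sym4_inv a b c ** sym4 a b c = mat 1"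
proof -
  define D where "D = (a + c)\<^sup>2 - 4 * b\<^sup>2"
  have D: "D \<noteq> 0" "(a + c)\<^sup>2 = D + 4 * b\<^sup>2" and ac: "a - c \<noteq> 0"
    using assms by (auto simp: D_def)
  define \<alpha> where "\<alpha> = sym4_inv_diag a b c"
  define \<beta> where "\<beta> = sym4_inv_adj a b c"
  define \<gamma> where "\<gamma> = sym4_inv_opp a b c"
  have "\<alpha> + \<gamma> = (a + c) / D" "\<alpha> - \<gamma> = 1 / (a - c)" and \<beta>: "\<beta> = - b / D"
    using sym4_inv_entries[of a b c]
    by (simp_all add: \<alpha>_def \<beta>_def \<gamma>_def sym4_inv_adj_def D_def)
  then have \<alpha>\<gamma>: "(a + c) * (\<alpha> + \<gamma>) = (D + 4 * b\<^sup>2) / D" "(a - c) * (\<alpha> - \<gamma>) = 1"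
    using D ac by (simp_all flip: power2_eq_square)
  have "a * \<alpha> + 2 * b * \<beta> + c * \<gamma> = ((a + c) * (\<alpha> + \<gamma>) + (a - c) * (\<alpha> - \<gamma>)) / 2 + 2 * b * \<beta>"
    by (simp add: field_simps)
  also have "\<dots> = ((D + 4 * b\<^sup>2) / D + 1) / 2 - 2 * b\<^sup>2 / D"
    by (simp add: \<alpha>\<gamma> \<beta> power2_eq_square)
  also have "\<dots> = 1"
    using D(1) by (simp add: field_simps)
  finally have e1: "a * \<alpha> + 2 * b * \<beta> + c * \<gamma> = 1" .
  have "a * \<gamma> + 2 * b * \<beta> + c * \<alpha> = ((a + c) * (\<alpha> + \<gamma>) - (a - c) * (\<alpha> - \<gamma>)) / 2 + 2 * b * \<beta>"
    by (simp add: field_simps)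
  also have "\<dots> = ((D + 4 * b\<^sup>2) / D - 1) / 2 - 2 * b\<^sup>2 / D"
    by (simp add: \<alpha>\<gamma> \<beta> power2_eq_square)
  also have "\<dots> = 0"
    using D(1) by (simp add: field_simps)
  finally have e3: "a * \<gamma> + 2 * b * \<beta> + c * \<alpha> = 0" .
  have "a * \<beta> + b * \<alpha> + b * \<gamma> + c * \<beta> = (a + c) * \<beta> + b * (\<alpha> + \<gamma>)"
    by (simp add: algebra_simps)
  then have e2: "a * \<beta> + b * \<alpha> + b * \<gamma> + c * \<beta> = 0"
    using D \<open>\<alpha> + \<gamma> = (a + c) / D\<close> by (simp add: \<beta> field_simps)
  show "sym4 a b c ** sym4_inv a b c = mat 1" "sym4_inv a b c ** sym4 a b c = mat 1"
    using e1 e2 e3 unfolding sym4_inv_def sym4_mult mat_1_eq_sym4 \<alpha>_def[symmetric] \<beta>_def[symmetric] \<gamma>_def[symmetric]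
    by (simp_all add: ac_simps)
qed

lemma matrix_inv_sym4:
  assumes "(a + c)\<^sup>2 \<noteq> 4 * b\<^sup>2" "a \<noteq> c"
  shows "invertible (sym4 a b c)" "matrix_inv (sym4 a b c) = sym4_inv a b c"
  using sym4_mult_sym4_inv[OF assms] by (auto simp: invertible_def intro: matrix_inv_unique)

interpretation gmat_chart: riemannian_P_chart "gmat A B C" "\<lambda>k. k + 2"
proof
  show "(j::4) + 2 + 2 = j" for j by simp
  show "gmat A B C q $ j $ k = gmat A B C q $ k $ j" for q j k
    using exhaust_4[of j] exhaust_4[of k] by (auto simp: gmat_def vector_def)
  show "gmat A B C q $ (j + 2) $ (k + 2) = gmat A B C q $ j $ k" for q j k
    using exhaust_4[of j] exhaust_4[of k] by (auto simp: gmat_def vector_def)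
qed

lemma theta_coord_gmat:
  assumes "invertible (gmat A B C p)" and inv: "matrix_inv (gmat A B C p) = sym4 \<alpha> \<beta> \<gamma>"
  shows "theta_coord (gmat A B C) Pmat p 1
           = 2 * \<alpha> * (pd 3 A p - pd 1 C p) + 4 * \<beta> * (pd 3 B p - pd 1 B p) + 2 * \<gamma> * (pd 3 C p - pd 1 A p)"
    and "theta_coord (gmat A B C) Pmat p 3
           = - (2 * \<alpha> * (pd 3 C p - pd 1 A p) + 4 * \<beta> * (pd 3 B p - pd 1 B p) + 2 * \<gamma> * (pd 3 A p - pd 1 C p))"
    and "theta_coord (gmat A B C) Pmat p 2
           = 2 * \<alpha> * (pd 4 A p - pd 2 C p) + 4 * \<beta> * (pd 4 B p - pd 2 B p) + 2 * \<gamma> * (pd 4 C p - pd 2 A p)"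
    and "theta_coord (gmat A B C) Pmat p 4
           = - (2 * \<alpha> * (pd 4 C p - pd 2 A p) + 4 * \<beta> * (pd 4 B p - pd 2 B p) + 2 * \<gamma> * (pd 4 A p - pd 2 C p))"
  unfolding theta_coord_def Pmat_eq_perm_matrix gmat_chart.Fcoord_perm_matrix[OF assms(1)] inv
  by (simp_all only: sum_4 plus_2_num4)
    (simp_all add: christoffel_first_def sym4_def gmat_def vector_def field_simps)

lemma theta_pair_eq_zero_iff:
  fixes a b c X Y Z :: real
  assumes "(a + c)\<^sup>2 \<noteq> 4 * b\<^sup>2" "a \<noteq> c"
  defines "\<alpha> \<equiv> sym4_inv_diag a b c" and "\<beta> \<equiv> sym4_inv_adj a b c" and "\<gamma> \<equiv> sym4_inv_opp a b c"
  shows "(2 * \<alpha> * X + 4 * \<beta> * Z + 2 * \<gamma> * Y = 0 \<and> - (2 * \<alpha> * Y + 4 * \<beta> * Z + 2 * \<gamma> * X) = 0)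
     \<longleftrightarrow> (a + c) * Y = 2 * b * Z \<and> Y = X"
proof -
  define D where "D = (a + c)\<^sup>2 - 4 * b\<^sup>2"
  have D: "D \<noteq> 0" and ac: "a - c \<noteq> 0" using assms(1,2) by (auto simp: D_def)
  have \<alpha>\<gamma>: "\<alpha> + \<gamma> = (a + c) / D" "\<alpha> - \<gamma> = 1 / (a - c)" and \<beta>: "\<beta> = - b / D"
    using sym4_inv_entries[of a b c] by (simp_all add: \<alpha>_def \<beta>_def \<gamma>_def sym4_inv_adj_def D_def)
  let ?e1 = "2 * \<alpha> * X + 4 * \<beta> * Z + 2 * \<gamma> * Y" and ?e2 = "- (2 * \<alpha> * Y + 4 * \<beta> * Z + 2 * \<gamma> * X)"
  have sums: "(\<alpha> - \<gamma>) * (X - Y) = (?e1 + ?e2) / 2" "(\<alpha> + \<gamma>) * (X + Y) + 4 * \<beta> * Z = (?e1 - ?e2) / 2"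
    by (simp_all add: field_simps)
  have "(\<alpha> + \<gamma>) * (Y + Y) + 4 * \<beta> * Z = 2 * ((a + c) * Y - 2 * b * Z) / D"
    using D by (simp add: \<alpha>\<gamma> \<beta> field_simps)
  then have key: "(\<alpha> + \<gamma>) * (Y + Y) + 4 * \<beta> * Z = 0 \<longleftrightarrow> (a + c) * Y = 2 * b * Z"
    using D by (auto simp: algebra_simps)
  show ?thesis
  proof
    assume "?e1 = 0 \<and> ?e2 = 0"
    then have "(\<alpha> - \<gamma>) * (X - Y) = 0" "(\<alpha> + \<gamma>) * (X + Y) + 4 * \<beta> * Z = 0"
      unfolding sums by simp_all
    moreover have "\<alpha> - \<gamma> \<noteq> 0" using ac by (simp add: \<alpha>\<gamma>)
    ultimately show "(a + c) * Y = 2 * b * Z \<and> Y = X" using key by simp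
  next
    assume "(a + c) * Y = 2 * b * Z \<and> Y = X"
    then have "(\<alpha> - \<gamma>) * (X - Y) = 0" "(\<alpha> + \<gamma>) * (X + Y) + 4 * \<beta> * Z = 0"
      using key by auto
    then have "?e1 + ?e2 = 0" "?e1 - ?e2 = 0" unfolding sums by simp_all
    then show "?e1 = 0 \<and> ?e2 = 0" by linarith
  qed
qed

lemma W2_at_gmat_iff:
  assumes "C p < A p" "B p < C p" "0 < B p"
  shows "W2_at (gmat A B C) Pmat p \<longleftrightarrow>
           (A p + C p) * (pd 3 C p - pd 1 A p) = 2 * B p * (pd 3 B p - pd 1 B p)
         \<and> pd 3 C p - pd 1 A p = pd 3 A p - pd 1 C p
         \<and> (A p + C p) * (pd 4 C p - pd 2 A p) = 2 * B p * (pd 4 B p - pd 2 B p)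
         \<and> pd 4 C p - pd 2 A p = pd 4 A p - pd 2 C p" (is "_ \<longleftrightarrow> ?conditions")
proof -
  have "(2 * B p)\<^sup>2 < (A p + C p)\<^sup>2"
    using assms by (intro power_strict_mono) auto
  then have nondeg: "(A p + C p)\<^sup>2 \<noteq> 4 * (B p)\<^sup>2" "A p \<noteq> C p"
    using assms by (auto simp: power_mult_distrib)
  note inv = matrix_inv_sym4[OF nondeg, folded gmat_eq_sym4]
  have "W2_at (gmat A B C) Pmat p \<longleftrightarrow> (\<forall>k. theta_coord (gmat A B C) Pmat p k = 0)"
    unfolding Pmat_eq_perm_matrix by (rule gmat_chart.W2_at_perm_matrix_iff[OF inv(1)])
  also have "\<dots> \<longleftrightarrow> (theta_coord (gmat A B C) Pmat p 1 = 0 \<and> theta_coord (gmat A B C) Pmat p 3 = 0)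
                   \<and> (theta_coord (gmat A B C) Pmat p 2 = 0 \<and> theta_coord (gmat A B C) Pmat p 4 = 0)"
    by (auto simp: forall_4)
  also have "\<dots> \<longleftrightarrow> ?conditions"
    unfolding theta_coord_gmat[OF inv(1) inv(2)[unfolded sym4_inv_def]] theta_pair_eq_zero_iff[OF nondeg]
    by blast
  finally show ?thesis .
qed

theorem theorem3p8:
  fixes U :: "(real^4) set" and A B C :: "real^4 \<Rightarrow> real"
  assumes "open U"
    and "coord_smooth_on U A" and "coord_smooth_on U B" and "coord_smooth_on U C"
    and "\<forall>p\<in>U. A p > C p \<and> C p > B p \<and> B p > 0"
  shows "(\<forall>p\<in>U. W2_at (gmat A B C) Pmat p) \<longleftrightarrow>
         (\<forall>p\<in>U. (A p + C p) * (pd 3 C p - pd 1 A p) = 2 * B p * (pd 3 B p - pd 1 B p)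
               \<and> pd 3 C p - pd 1 A p = pd 3 A p - pd 1 C p
               \<and> (A p + C p) * (pd 4 C p - pd 2 A p) = 2 * B p * (pd 4 B p - pd 2 B p)
               \<and> pd 4 C p - pd 2 A p = pd 4 A p - pd 2 C p)"
  using assms(5) by (intro ball_cong refl W2_at_gmat_iff) auto

end
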